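(* Let $K$ and $L$ be positive integers. Consider the $K$-user single-input single-output (SISO) broadcast channel with symbol extension factor $L$ and no channel state information at the transmitter (CSIT), as described in the context. Then the maximum achievable SpAC is $\frac{L-K+1}{L}$; equivalently, the largest achievable number of streams per user is $d = L-K+1$.
   Context: Model: one transmitter and $K$ receivers, each with a single antenna. Over $L$ channel uses (symbol extension factor $L$), receiver $i\in\{1,\dots,K\}$ observes $\mathbf{y}_i = \mathbf{H}_{i,i}\sum_{j=1}^K \mathbf{Q}_j\mathbf{x}_j + \mathbf{n}_i \in \mathbb{C}^{L}$, where $\mathbf{H}_{i,i}\in\mathbb{C}^{L\times L}$ is diagonal with the channel coefficients on the diagonal, $\mathbf{x}_j\in\mathbb{C}^{d}$ is the finite-alphabet symbol vector intended for receiver $j$, $\mathbf{Q}_j\in\mathbb{C}^{L\times d}$ is the precoder for $\mathbf{x}_j$ (of rank $d$), and $\mathbf{n}_i$ is Gaussian noise. No CSIT means the precoders $\mathbf{Q}_1,\dots,\mathbf{Q}_K$ are fixed and may not depend on the channel coefficients. For receiver $i$, the desired-signal subspace is $\mathcal{S}_i=\mathrm{span}(\mathbf{H}_{i,i}\mathbf{Q}_i)$ and the interference subspace is $\mathcal{I}_i=\sum_{j\neq i}\mathrm{span}(\mathbf{H}_{i,i}\mathbf{Q}_j)$ (sum of column spaces). A value $d$ is achievable if there exist such channel-independent precoders such that, for almost every realization of the channel coefficients, for every receiver $i$: (a) $\sum_{j=1}^K \mathrm{span}(\mathbf{H}_{i,i}\mathbf{Q}_j)=\mathbb{C}^{L}$,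 and (b) $\mathcal{S}_i\not\subseteq\mathcal{I}_i$. SpAC (symbols per transmit antenna per channel use) of such a scheme is $d/L$; the maximum achievable SpAC is the maximum of $d/L$ over achievable $d$. *)

theory Defs
  imports "HOL-Probability.Probability" "Jordan_Normal_Form.DL_Rank"
begin

definition colsp :: "nat \<Rightarrow> complex mat \<Rightarrow> complex vec set" where
  "colsp L A = (vec_space.col_space L A :: complex vec set)"

definition subspace_sum :: "nat \<Rightarrow> (nat \<Rightarrow> complex vec set) \<Rightarrow> nat set \<Rightarrow> complex vec set" where
  "subspace_sum L W J =
     {finsum (module_vec TYPE(complex) L) u J | u. \<forall>j\<in>J. u j \<in> W j}"

text \<open>Diagonal channel matrix H_{i,i} over L channel uses; the channel coefficients are
  h (i, t) for receiver i < K and channel use t < L.\<close>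
definition chan_mat :: "nat \<Rightarrow> (nat \<times> nat \<Rightarrow> complex) \<Rightarrow> nat \<Rightarrow> complex mat" where
  "chan_mat L h i = mat L L (\<lambda>(r, c). if r = c then h (i, r) else 0)"

definition chan_measure :: "nat \<Rightarrow> nat \<Rightarrow> (nat \<times> nat \<Rightarrow> complex) measure" where
  "chan_measure K L = PiM ({..<K} \<times> {..<L}) (\<lambda>_. lborel)"

definition achievable :: "nat \<Rightarrow> nat \<Rightarrow> nat \<Rightarrow> bool" where
  "achievable K L d \<longleftrightarrow>
     (\<exists>Q :: nat \<Rightarrow> complex mat.
        (\<forall>j<K. Q j \<in> carrier_mat L d \<and> vec_space.rank L (Q j :: complex mat) = d) \<and>
        (AE h in chan_measure K L.
           \<forall>i<K.
             subspace_sum L (\<lambda>j. colsp L (chan_mat L h i * Q j)) {..<K} = carrier_vec L \<and>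
             \<not> (colsp L (chan_mat L h i * Q i) \<subseteq>
                 subspace_sum L (\<lambda>j. colsp L (chan_mat L h i * Q j)) ({..<K} - {i}))))"

end

theory Submission
  imports Defs
begin

(* Achievability: all K users share the coordinate axes e_0, ..., e_(L-K-1), and user j
   additionally owns the private axis e_(L-K+j).  A diagonal channel with nonzero coefficients maps
   every axis onto itself, so each receiver sees all of C^L, while only user i's signal has a
   component along e_(L-K+i).

   Converse: multiplying by the channel matrix preserves inclusions between sums of column spaces,
   so condition (b) for a single channel realisation already gives, for every i, a vector of
   span Q_i outside the sum of the other users' spans.  Adjoining these vectors for i = 1, ..., K-1
   to a basis of span Q_0 (d vectors) yields d + K - 1 independent vectors in C^L. *)

no_notation Finite_Cartesian_Product.vec_nth (infixl "$" 90)

section \<open>Almost every channel realisation\<close>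

lemma emeasure_space_chan_measure_neq_0:
  "emeasure (chan_measure K L) (space (chan_measure K L)) \<noteq> 0"
proof -
  interpret product_sigma_finite "\<lambda>_::nat \<times> nat. lborel :: complex measure"
    by (simp add: product_sigma_finite_def sigma_finite_lborel)
  have "space (chan_measure K L) = (\<Pi>\<^sub>E q\<in>{..<K} \<times> {..<L}. UNIV)"
    by (simp add: chan_measure_def space_PiM)
  then have "emeasure (chan_measure K L) (space (chan_measure K L))
      = (\<Prod>q\<in>{..<K} \<times> {..<L}. emeasure lborel (UNIV :: complex set))"
    unfolding chan_measure_def by (simp add: emeasure_PiM)
  then show ?thesis by simp
qed

lemma AE_ex:
  assumes "AE x in M. P x" "emeasure M (space M) \<noteq> 0"
  shows "\<exists>x. P x"
proof (rule ccontr)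
  assume "\<nexists>x. P x"
  with assms(1) have "ae_filter M = bot"
    by (simp add: trivial_limit_def)
  with assms(2) show False by (simp add: ae_filter_eq_bot_iff)
qed

lemma AE_chan_coeff_nonzero:
  "AE h in chan_measure K L. \<forall>i<K. \<forall>t<L. h (i, t) \<noteq> 0"
proof -
  interpret product_sigma_finite "\<lambda>_::nat \<times> nat. lborel :: complex measure"
    by (simp add: product_sigma_finite_def sigma_finite_lborel)
  let ?I = "{..<K} \<times> {..<L}"
  have "AE h in chan_measure K L. h p \<noteq> 0" if p: "p \<in> ?I" for p
  proof (rule AE_I')
    let ?N = "\<Pi>\<^sub>E q\<in>?I. if q = p then {0} else UNIV"
    have "emeasure (chan_measure K L) ?N
        = (\<Prod>q\<in>?I. emeasure lborel (if q = p then {0} else UNIV :: complex set))"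
      unfolding chan_measure_def by (intro emeasure_PiM) auto
    also have "\<dots> = 0"
      using p by (intro prod_zero) (auto intro!: bexI[of _ p])
    moreover have "?N \<in> sets (chan_measure K L)"
      unfolding chan_measure_def by (intro sets_PiM_I_finite) auto
    ultimately show "?N \<in> null_sets (chan_measure K L)" by (simp add: null_sets_def)
    show "{h \<in> space (chan_measure K L). \<not> h p \<noteq> 0} \<subseteq> ?N"
      by (auto simp: chan_measure_def space_PiM PiE_iff extensional_def)
  qed
  then have "AE h in chan_measure K L. \<forall>p\<in>?I. h p \<noteq> 0"
    by (subst AE_finite_all) auto
  then show ?thesis by eventually_elim auto
qed

section \<open>Column spaces and sums of subspaces\<close>

abbreviation csubspace :: "nat \<Rightarrow> complex vec set \<Rightarrow> bool" where
  "csubspace L W \<equiv> LinearCombinations.submodule class_ring W (module_vec TYPE(complex) L)"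

abbreviation clin_indpt :: "nat \<Rightarrow> complex vec set \<Rightarrow> bool" where
  "clin_indpt L S \<equiv> \<not> module.lin_dep class_ring (module_vec TYPE(complex) L) S"

lemma csubspace_carrier:
  assumes "csubspace L W"
  shows "W \<subseteq> carrier_vec L"
  using submodule.subset[OF assms] by (simp add: module_vec_simps)

lemma colsp_eq_image:
  assumes "A \<in> carrier_mat L n"
  shows "colsp L A = (\<lambda>x. A *\<^sub>v x) ` carrier_vec n"
proof -
  interpret vec_space "TYPE(complex)" L .
  show ?thesis unfolding colsp_def using col_space_eq[OF assms] assms by auto
qed

lemma colsp_mult:
  assumes "H \<in> carrier_mat m L" "A \<in> carrier_mat L n"
  shows "colsp m (H * A) = (\<lambda>v. H *\<^sub>v v) ` colsp L A"
proof -
  have HA: "H * A \<in> carrier_mat m n" using assms by simp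
  show ?thesis
    unfolding colsp_eq_image[OF assms(2)] colsp_eq_image[OF HA] image_image
    using assms by (intro image_cong) auto
qed

lemma colsp_submodule:
  assumes "A \<in> carrier_mat L n"
  shows "csubspace L (colsp L A)"
proof -
  interpret vec_space "TYPE(complex)" L .
  show ?thesis
    unfolding colsp_def col_space_def using span_is_submodule cols_dim[of A] assms by auto
qed

lemma col_mem_colsp:
  assumes "A \<in> carrier_mat L n" "c < n"
  shows "col A c \<in> colsp L A"
proof -
  interpret vec_space "TYPE(complex)" L .
  have "col A c \<in> set (cols A)" using assms by (simp add: cols_def)
  then show ?thesis
    unfolding colsp_def col_space_def using assms cols_dim in_own_span by blast
qed

lemma colsp_index_eq_0:
  assumes "A \<in> carrier_mat L n" "t < L" "\<And>c. c < n \<Longrightarrow> A $$ (t, c) = 0" "v \<in> colsp L A"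
  shows "v $ t = 0"
proof -
  obtain x where "x \<in> carrier_vec n" "v = A *\<^sub>v x"
    using assms(1,4) by (auto simp: colsp_eq_image)
  then show ?thesis using assms(1-3) by (simp add: scalar_prod_def)
qed

lemma exists_indpt_subset_colsp:
  assumes "A \<in> carrier_mat L n"
  shows "\<exists>S \<subseteq> colsp L A. clin_indpt L S \<and> finite S \<and> card S = vec_space.rank L A"
proof -
  interpret vec_space "TYPE(complex)" L .
  have "\<not> lin_dep {}" by (simp add: lin_dep_def)
  then obtain S where S: "finite S" "maximal S (\<lambda>T. T \<subseteq> set (cols A) \<and> lin_indpt T)"
    using maximal_exists_superset[of "set (cols A)" "\<lambda>T. T \<subseteq> set (cols A) \<and> lin_indpt T" "{}"]
    by auto
  then have "S \<subseteq> set (cols A)" "lin_indpt S" by (auto simp: maximal_def)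
  moreover have "set (cols A) \<subseteq> colsp L A"
    unfolding colsp_def col_space_def using assms cols_dim in_own_span by blast
  ultimately show ?thesis
    using S rank_card_indpt[OF assms S(2)] by (intro exI[of _ S]) auto
qed

lemma mult_mat_vec_finsum:
  fixes A :: "'a :: comm_ring_1 mat"
  assumes "A \<in> carrier_mat m n" "finite J" "u \<in> J \<rightarrow> carrier_vec n"
  shows "A *\<^sub>v finsum_vec TYPE('a) n u J = finsum_vec TYPE('a) m (\<lambda>j. A *\<^sub>v u j) J"
  using assms(2,3)
proof (induction J rule: finite_induct)
  case empty
  then show ?case using assms(1) by (auto simp: finsum_vec_empty intro!: eq_vecI)
next
  case (insert j J)
  have "finsum_vec TYPE('a) n u J \<in> carrier_vec n"
    using insert by (intro finsum_vec_closed) auto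
  then show ?case
    using insert assms(1)
    by (simp add: finsum_vec_insert finsum_vec_closed mult_add_distrib_mat_vec Pi_iff)
qed

lemma subspace_sum_mult_mat_vec:
  assumes "H \<in> carrier_mat m L" "finite J" "\<And>j. j \<in> J \<Longrightarrow> W j \<subseteq> carrier_vec L"
    and "v \<in> subspace_sum L W J"
  shows "H *\<^sub>v v \<in> subspace_sum m (\<lambda>j. (\<lambda>w. H *\<^sub>v w) ` W j) J"
proof -
  obtain u where u: "\<And>j. j \<in> J \<Longrightarrow> u j \<in> W j"
    and v: "v = finsum (module_vec TYPE(complex) L) u J"
    using assms(4) unfolding subspace_sum_def by blast
  have "H *\<^sub>v v = finsum (module_vec TYPE(complex) m) (\<lambda>j. H *\<^sub>v u j) J"
    using mult_mat_vec_finsum[OF assms(1,2), of u] u assms(3) v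
    by (auto simp: vec_space.finsum_vec)
  then show ?thesis unfolding subspace_sum_def using u by blast
qed

lemma subspace_sum_index_eq_0:
  assumes "finite J" "\<And>j. j \<in> J \<Longrightarrow> W j \<subseteq> carrier_vec L" "t < L"
    and "\<And>j w. j \<in> J \<Longrightarrow> w \<in> W j \<Longrightarrow> w $ t = 0" "v \<in> subspace_sum L W J"
  shows "v $ t = 0"
proof -
  obtain u where u: "\<And>j. j \<in> J \<Longrightarrow> u j \<in> W j"
    and v: "v = finsum (module_vec TYPE(complex) L) u J"
    using assms(5) unfolding subspace_sum_def by blast
  have "v $ t = (\<Sum>j\<in>J. u j $ t)"
    using index_finsum_vec[OF assms(1,3), of u] u assms(2) v by (auto simp: vec_space.finsum_vec)
  then show ?thesis using u assms(4) by simp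
qed

lemma subspace_sum_submodule:
  assumes "finite J" "\<And>j. j \<in> J \<Longrightarrow> csubspace L (W j)"
  shows "csubspace L (subspace_sum L W J)"
proof -
  interpret cv: vec_space "TYPE(complex)" L .
  have carrier: "W j \<subseteq> carrier_vec L" and zero: "0\<^sub>v L \<in> W j"
    and add: "\<And>v w. v \<in> W j \<Longrightarrow> w \<in> W j \<Longrightarrow> v + w \<in> W j"
    and smult: "\<And>c v. v \<in> W j \<Longrightarrow> c \<cdot>\<^sub>v v \<in> W j" if "j \<in> J" for j
    using submodule.subset[OF assms(2)[OF that]] submodule.zero_closed[OF assms(2)[OF that]]
      submodule.m_closed[OF assms(2)[OF that]] submodule.smult_closed[OF assms(2)[OF that]]
    by simp_all
  have mem: "finsum cv.V u J \<in> subspace_sum L W J" if "\<And>j. j \<in> J \<Longrightarrow> u j \<in> W j" for u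
    using that unfolding subspace_sum_def by blast
  have Pi: "u \<in> J \<rightarrow> carrier_vec L" if "\<And>j. j \<in> J \<Longrightarrow> u j \<in> W j" for u
    using that carrier by blast
  show ?thesis
  proof (unfold_locales)
    show "subspace_sum L W J \<subseteq> carrier cv.V"
      unfolding subspace_sum_def using Pi cv.finsum_closed by auto
    have "finsum cv.V (\<lambda>_. 0\<^sub>v L) J = 0\<^sub>v L"
      using cv.finsum_zero[of J] by simp
    then show "\<zero>\<^bsub>cv.V\<^esub> \<in> subspace_sum L W J"
      using mem[of "\<lambda>_. 0\<^sub>v L"] zero by simp
  next
    fix v w assume "v \<in> subspace_sum L W J" "w \<in> subspace_sum L W J"
    then obtain u u' where u: "\<And>j. j \<in> J \<Longrightarrow> u j \<in> W j" "v = finsum cv.V u J"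
      and u': "\<And>j. j \<in> J \<Longrightarrow> u' j \<in> W j" "w = finsum cv.V u' J"
      unfolding subspace_sum_def by blast
    have "v \<oplus>\<^bsub>cv.V\<^esub> w = finsum cv.V (\<lambda>j. u j + u' j) J"
      using cv.finsum_addf[OF Pi[OF u(1)] Pi[OF u'(1)]] u(2) u'(2) by simp
    then show "v \<oplus>\<^bsub>cv.V\<^esub> w \<in> subspace_sum L W J"
      using mem[of "\<lambda>j. u j + u' j"] add u(1) u'(1) by simp
  next
    fix c v assume "v \<in> subspace_sum L W J"
    then obtain u where u: "\<And>j. j \<in> J \<Longrightarrow> u j \<in> W j" "v = finsum cv.V u J"
      unfolding subspace_sum_def by blast
    have "c \<odot>\<^bsub>cv.V\<^esub> v = finsum cv.V (\<lambda>j. c \<cdot>\<^sub>v u j) J"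
      using cv.finsum_smult[OF _ Pi[OF u(1)], of c] u(2) by simp
    then show "c \<odot>\<^bsub>cv.V\<^esub> v \<in> subspace_sum L W J"
      using mem[of "\<lambda>j. c \<cdot>\<^sub>v u j"] smult u(1) by simp
  qed
qed

lemma subspace_sum_mono:
  assumes "finite J'" "J \<subseteq> J'" "\<And>j. j \<in> J' \<Longrightarrow> csubspace L (W j)"
  shows "subspace_sum L W J \<subseteq> subspace_sum L W J'"
proof
  interpret cv: vec_space "TYPE(complex)" L .
  fix v assume "v \<in> subspace_sum L W J"
  then obtain u where u: "\<And>j. j \<in> J \<Longrightarrow> u j \<in> W j" and v: "v = finsum cv.V u J"
    unfolding subspace_sum_def by blast
  let ?u = "\<lambda>j. if j \<in> J then u j else 0\<^sub>v L"
  have u': "?u j \<in> W j" if "j \<in> J'" for j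
    using u submodule.zero_closed[OF assms(3)[OF that]] by simp
  have "?u \<in> J' \<rightarrow> carrier_vec L"
    using u' csubspace_carrier[OF assms(3)] by blast
  then have "v = finsum cv.V ?u J'"
    unfolding v by (intro cv.add.finprod_mono_neutral_cong_left[OF assms(1,2)]) simp_all
  then show "v \<in> subspace_sum L W J'"
    unfolding subspace_sum_def using u' by blast
qed

lemma subspace_sum_upper:
  assumes "finite J" "j \<in> J" "\<And>j. j \<in> J \<Longrightarrow> csubspace L (W j)"
  shows "W j \<subseteq> subspace_sum L W J"
proof
  interpret cv: vec_space "TYPE(complex)" L .
  fix w assume w: "w \<in> W j"
  let ?u = "\<lambda>k. if j = k then w else 0\<^sub>v L"
  have u: "?u k \<in> W k" if "k \<in> J" for k
    using w submodule.zero_closed[OF assms(3)[OF that]] by auto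
  have "w \<in> carrier_vec L"
    using w csubspace_carrier[OF assms(3)[OF assms(2)]] by blast
  then have "w = finsum cv.V ?u J"
    using cv.add.finprod_singleton[OF assms(2,1), of "\<lambda>_. w"] by simp
  then show "w \<in> subspace_sum L W J"
    unfolding subspace_sum_def using u by blast
qed

lemma chan_mat_carrier: "chan_mat L h i \<in> carrier_mat L L"
  by (simp add: chan_mat_def)

lemma index_chan_mat_mult:
  assumes "A \<in> carrier_mat L n" "r < L" "c < n"
  shows "(chan_mat L h i * A) $$ (r, c) = h (i, r) * A $$ (r, c)"
proof -
  have "row (chan_mat L h i) r = h (i, r) \<cdot>\<^sub>v unit_vec L r"
    using assms(2) by (intro eq_vecI) (auto simp: chan_mat_def)
  then show ?thesis using assms by (simp add: chan_mat_def)
qed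

section \<open>The converse bound\<close>

lemma lin_indpt_insert_notin_submodule:
  assumes "csubspace L N" "T \<subseteq> N" "clin_indpt L T" "w \<in> carrier_vec L" "w \<notin> N"
  shows "clin_indpt L (insert w T)"
proof -
  interpret cv: vec_space "TYPE(complex)" L .
  have T: "T \<subseteq> carrier_vec L" using assms(2) csubspace_carrier[OF assms(1)] by blast
  have "w \<notin> cv.span T" using cv.span_is_subset[OF assms(2,1)] assms(5) by blast
  moreover have "w \<notin> T" using assms(2,5) by blast
  ultimately have "clin_indpt L (T \<union> {w})"
    using cv.lin_dep_iff_in_span[OF _ assms(3)] T assms(4) by simp
  moreover have "T \<union> {w} = insert w T" by blast
  ultimately show ?thesis by simp
qed

lemma lin_indpt_extend_along_subspace_sum:
  assumes W: "\<And>j. j < K \<Longrightarrow> csubspace L (W j)"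
    and S: "S \<subseteq> W 0" "clin_indpt L S" "finite S"
    and w: "\<And>i. i < K \<Longrightarrow> w i \<in> W i"
      "\<And>i. i < K \<Longrightarrow> w i \<notin> subspace_sum L W ({..<K} - {i})"
    and "k < K"
  shows "\<exists>T \<subseteq> subspace_sum L W {..k}. clin_indpt L T \<and> finite T \<and> card T = card S + k"
  using \<open>k < K\<close>
proof (induction k)
  case 0
  have "W 0 \<subseteq> subspace_sum L W {..0}"
    using 0 W by (intro subspace_sum_upper[where W = W and L = L and j = 0]) auto
  then show ?case using S by (intro exI[of _ S]) auto
next
  case (Suc k)
  obtain T where T: "T \<subseteq> subspace_sum L W {..k}" "clin_indpt L T" "finite T" "card T = card S + k"
    using Suc.IH[OF Suc_lessD[OF Suc.prems]] by blast
  let ?w = "w (Suc k)" and ?N = "subspace_sum L W ({..<K} - {Suc k})"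
  have "subspace_sum L W {..k} \<subseteq> ?N"
    using Suc.prems W by (intro subspace_sum_mono[where W = W and L = L and J = "{..k}"]) auto
  then have "T \<subseteq> ?N" using T(1) by blast
  have "csubspace L ?N"
    using W by (intro subspace_sum_submodule[where W = W and L = L]) auto
  have "?w \<in> carrier_vec L"
    using w(1)[OF Suc.prems] csubspace_carrier[OF W[OF Suc.prems]] by blast
  have "?w \<notin> ?N" using w(2)[OF Suc.prems] .
  have indpt: "clin_indpt L (insert ?w T)"
    by (rule lin_indpt_insert_notin_submodule[OF \<open>csubspace L ?N\<close> \<open>T \<subseteq> ?N\<close> T(2)
          \<open>?w \<in> carrier_vec L\<close> \<open>?w \<notin> ?N\<close>])
  have "?w \<notin> T" using \<open>T \<subseteq> ?N\<close> \<open>?w \<notin> ?N\<close> by blast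
  then have card: "card (insert ?w T) = card S + Suc k" using T(3,4) by simp
  have "subspace_sum L W {..k} \<subseteq> subspace_sum L W {..Suc k}"
    using Suc.prems W by (intro subspace_sum_mono[where W = W and L = L and J = "{..k}"]) auto
  moreover have "W (Suc k) \<subseteq> subspace_sum L W {..Suc k}"
    using Suc.prems W by (intro subspace_sum_upper[where W = W and L = L and j = "Suc k"]) auto
  ultimately have "insert ?w T \<subseteq> subspace_sum L W {..Suc k}"
    using T(1) w(1)[OF Suc.prems] by blast
  then show ?case using indpt card T(3) by blast
qed

lemma card_indpt_plus_le_dim:
  assumes "0 < K" and W: "\<And>j. j < K \<Longrightarrow> csubspace L (W j)"
    and S: "S \<subseteq> W 0" "clin_indpt L S" "finite S"
    and w: "\<And>i. i < K \<Longrightarrow> w i \<in> W i"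
      "\<And>i. i < K \<Longrightarrow> w i \<notin> subspace_sum L W ({..<K} - {i})"
  shows "card S + (K - 1) \<le> L"
proof -
  interpret cv: vec_space "TYPE(complex)" L .
  obtain T where T: "T \<subseteq> subspace_sum L W {..K - 1}" "clin_indpt L T" "card T = card S + (K - 1)"
    using lin_indpt_extend_along_subspace_sum[OF W S w, of "K - 1"] assms(1) by auto
  have "csubspace L (subspace_sum L W {..K - 1})"
    using W assms(1) by (intro subspace_sum_submodule[where W = W and L = L]) auto
  then have "T \<subseteq> carrier_vec L"
    using T(1) csubspace_carrier by blast
  then have "card T \<le> cv.dim" using cv.li_le_dim(2)[OF cv.fin_dim _ T(2)] by simp
  then show ?thesis using T(3) cv.dim_is_n by simp
qed

lemma colsp_subset_subspace_sum_mult: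
  assumes H: "H \<in> carrier_mat L L" and "finite J"
    and Q: "Q i \<in> carrier_mat L (n i)" "\<And>j. j \<in> J \<Longrightarrow> Q j \<in> carrier_mat L (n j)"
    and sub: "colsp L (Q i) \<subseteq> subspace_sum L (\<lambda>j. colsp L (Q j)) J"
  shows "colsp L (H * Q i) \<subseteq> subspace_sum L (\<lambda>j. colsp L (H * Q j)) J"
proof
  fix y assume "y \<in> colsp L (H * Q i)"
  then obtain v where v: "v \<in> colsp L (Q i)" and y: "y = H *\<^sub>v v"
    using colsp_mult[OF H Q(1)] by blast
  have "colsp L (Q j) \<subseteq> carrier_vec L" if "j \<in> J" for j
    using csubspace_carrier[OF colsp_submodule[OF Q(2)[OF that]]] .
  then have "y \<in> subspace_sum L (\<lambda>j. (\<lambda>v. H *\<^sub>v v) ` colsp L (Q j)) J"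
    unfolding y using v sub by (intro subspace_sum_mult_mat_vec[OF H \<open>finite J\<close>]) auto
  moreover have "(\<lambda>v. H *\<^sub>v v) ` colsp L (Q j) = colsp L (H * Q j)" if "j \<in> J" for j
    using colsp_mult[OF H Q(2)[OF that]] by simp
  ultimately show "y \<in> subspace_sum L (\<lambda>j. colsp L (H * Q j)) J"
    unfolding subspace_sum_def by simp
qed

lemma achievable_upper_bound:
  assumes "0 < K" "achievable K L d"
  shows "d + (K - 1) \<le> L"
proof -
  obtain Q where Q: "\<And>j. j < K \<Longrightarrow> Q j \<in> carrier_mat L d \<and> vec_space.rank L (Q j) = d"
    and ae: "AE h in chan_measure K L. \<forall>i<K.
      subspace_sum L (\<lambda>j. colsp L (chan_mat L h i * Q j)) {..<K} = carrier_vec L \<and>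
      \<not> colsp L (chan_mat L h i * Q i)
        \<subseteq> subspace_sum L (\<lambda>j. colsp L (chan_mat L h i * Q j)) ({..<K} - {i})"
    using assms(2) unfolding achievable_def by blast
  obtain h where h: "\<And>i. i < K \<Longrightarrow> \<not> colsp L (chan_mat L h i * Q i)
      \<subseteq> subspace_sum L (\<lambda>j. colsp L (chan_mat L h i * Q j)) ({..<K} - {i})"
    using AE_ex[OF ae emeasure_space_chan_measure_neq_0] by blast
  have "\<exists>w. w \<in> colsp L (Q i) \<and> w \<notin> subspace_sum L (\<lambda>j. colsp L (Q j)) ({..<K} - {i})"
    if i: "i < K" for i
  proof -
    have "Q i \<in> carrier_mat L d" "\<And>j. j \<in> {..<K} - {i} \<Longrightarrow> Q j \<in> carrier_mat L d"
      using Q i by auto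
    from colsp_subset_subspace_sum_mult[where Q = Q and i = i and n = "\<lambda>_. d",
        OF chan_mat_carrier finite_Diff[OF finite_lessThan] this]
    show ?thesis using h[OF i] by blast
  qed
  then obtain w where w: "\<And>i. i < K \<Longrightarrow> w i \<in> colsp L (Q i)"
    "\<And>i. i < K \<Longrightarrow> w i \<notin> subspace_sum L (\<lambda>j. colsp L (Q j)) ({..<K} - {i})"
    by metis
  obtain S where S: "S \<subseteq> colsp L (Q 0)" "clin_indpt L S" "finite S" "card S = d"
    using exists_indpt_subset_colsp[of "Q 0" L d] Q assms(1) by auto
  have "card S + (K - 1) \<le> L"
    using Q colsp_submodule by (intro card_indpt_plus_le_dim[OF assms(1) _ S(1-3) w]) blast+
  then show ?thesis using S(4) by simp
qed

section \<open>The achievability scheme\<close>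

definition precoder_row :: "nat \<Rightarrow> nat \<Rightarrow> nat \<Rightarrow> nat \<Rightarrow> nat" where
  "precoder_row L K j c = (if c < L - K then c else L - K + j)"

definition precoder :: "nat \<Rightarrow> nat \<Rightarrow> nat \<Rightarrow> complex mat" where
  "precoder L K j = mat L (L - K + 1) (\<lambda>(r, c). if r = precoder_row L K j c then 1 else 0)"

lemma precoder_carrier: "precoder L K j \<in> carrier_mat L (L - K + 1)"
  by (simp add: precoder_def)

lemma chan_mat_mult_precoder_carrier: "chan_mat L h i * precoder L K j \<in> carrier_mat L (L - K + 1)"
  using chan_mat_carrier precoder_carrier by (rule mult_carrier_mat)

lemma col_precoder:
  assumes "K \<le> L" "j < K" "c < L - K + 1"
  shows "col (precoder L K j) c = unit_vec L (precoder_row L K j c)"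
  using assms by (intro eq_vecI) (auto simp: precoder_def unit_vec_def)

lemma rank_precoder:
  assumes "K \<le> L" "j < K"
  shows "vec_space.rank L (precoder L K j) = L - K + 1"
proof -
  interpret cv: vec_space "TYPE(complex)" L .
  let ?row = "precoder_row L K j"
  have row: "?row c < L" if "c < L - K + 1" for c
    using assms that by (auto simp: precoder_row_def)
  have cols: "cols (precoder L K j) = map (\<lambda>c. unit_vec L (?row c)) [0..<L - K + 1]"
    using col_precoder[OF assms] by (simp add: cols_def precoder_def)
  have "inj_on (\<lambda>c. unit_vec L (?row c) :: complex vec) {0..<L - K + 1}"
    using row by (auto simp: inj_on_def precoder_row_def split: if_splits)
  then have "distinct (cols (precoder L K j))"
    unfolding cols by (simp add: distinct_map del: upt_Suc)
  moreover have "set (cols (precoder L K j)) \<subseteq> set (unit_vecs L)"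
    unfolding cols unit_vecs_def using row by auto
  then have "cv.lin_indpt (set (cols (precoder L K j)))"
    using cv.unit_vecs_basis cv.subset_li_is_li unfolding cv.basis_def by blast
  ultimately show ?thesis
    using cv.lin_indpt_full_rank[OF precoder_carrier] by blast
qed

lemma index_chan_mat_mult_precoder:
  assumes "r < L" "c < L - K + 1"
  shows "(chan_mat L h i * precoder L K j) $$ (r, c) = (if r = precoder_row L K j c then h (i, r) else 0)"
  using index_chan_mat_mult[OF precoder_carrier assms] assms by (simp add: precoder_def)

lemma col_chan_mat_mult_precoder:
  assumes "K \<le> L" "j < K" "c < L - K + 1"
  shows "col (chan_mat L h i * precoder L K j) c
    = h (i, precoder_row L K j c) \<cdot>\<^sub>v unit_vec L (precoder_row L K j c)"
    (is "col ?A c = ?v")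
proof (rule eq_vecI)
  have A: "dim_row ?A = L" "dim_col ?A = L - K + 1"
    using chan_mat_mult_precoder_carrier by (blast dest: carrier_matD)+
  then show "dim_vec (col ?A c) = dim_vec ?v" by simp
  fix r assume "r < dim_vec ?v"
  then have r: "r < L" by simp
  have "col ?A c $ r = ?A $$ (r, c)"
    using A r assms(3) by (intro index_col) simp_all
  also have "\<dots> = ?v $ r"
    using r assms(3) by (simp add: index_chan_mat_mult_precoder unit_vec_def)
  finally show "col ?A c $ r = ?v $ r" .
qed

lemma unit_vec_mem_colsp_chan_mat_mult_precoder:
  assumes "K \<le> L" "j < K" "c < L - K + 1" "h (i, precoder_row L K j c) \<noteq> 0"
  shows "unit_vec L (precoder_row L K j c) \<in> colsp L (chan_mat L h i * precoder L K j)"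
proof -
  let ?A = "chan_mat L h i * precoder L K j" and ?t = "precoder_row L K j c"
  have A: "?A \<in> carrier_mat L (L - K + 1)" by (rule chan_mat_mult_precoder_carrier)
  have "inverse (h (i, ?t)) \<cdot>\<^sub>v col ?A c \<in> colsp L ?A"
    using submodule.smult_closed[OF colsp_submodule[OF A] _ col_mem_colsp[OF A assms(3)]]
    by (simp add: module_vec_simps class_ring_simps)
  then show ?thesis
    using col_chan_mat_mult_precoder[OF assms(1-3)] assms(4) by (simp add: smult_smult_assoc)
qed

lemma subspace_sum_colsp_chan_mat_mult_precoder:
  assumes "0 < K" "K \<le> L" "\<And>t. t < L \<Longrightarrow> h (i, t) \<noteq> 0"
  shows "subspace_sum L (\<lambda>j. colsp L (chan_mat L h i * precoder L K j)) {..<K} = carrier_vec L"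
proof -
  interpret cv: vec_space "TYPE(complex)" L .
  let ?W = "\<lambda>j. colsp L (chan_mat L h i * precoder L K j)"
  let ?S = "subspace_sum L ?W {..<K}"
  have W: "csubspace L (?W j)" for j
    by (rule colsp_submodule[OF chan_mat_mult_precoder_carrier])
  have S: "csubspace L ?S"
    using W by (intro subspace_sum_submodule) auto
  have "unit_vec L t \<in> ?S" if "t < L" for t
  proof -
    define j where "j = (if t < L - K then 0 else t - (L - K))"
    define c where "c = (if t < L - K then t else L - K)"
    have jc: "j < K" "c < L - K + 1" "precoder_row L K j c = t"
      using that assms(1,2) by (auto simp: j_def c_def precoder_row_def)
    then have "unit_vec L t \<in> ?W j"
      using unit_vec_mem_colsp_chan_mat_mult_precoder[of K L j c h i] assms(2,3) that by simp
    moreover have "?W j \<subseteq> ?S"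
      using jc(1) W by (intro subspace_sum_upper[where W = ?W and L = L and j = j]) auto
    ultimately show ?thesis by blast
  qed
  then have "set (unit_vecs L) \<subseteq> ?S" by (auto simp: unit_vecs_def)
  then have "cv.span (set (unit_vecs L)) \<subseteq> ?S" using cv.span_is_subset S by blast
  then show ?thesis using cv.span_unit_vecs_is_carrier csubspace_carrier[OF S] by blast
qed

lemma colsp_chan_mat_mult_precoder_not_subset:
  assumes "K \<le> L" "i < K" "h (i, L - K + i) \<noteq> 0"
  shows "\<not> colsp L (chan_mat L h i * precoder L K i)
    \<subseteq> subspace_sum L (\<lambda>j. colsp L (chan_mat L h i * precoder L K j)) ({..<K} - {i})"
proof
  let ?t = "L - K + i" and ?A = "\<lambda>j. chan_mat L h i * precoder L K j"
  assume sub: "colsp L (?A i) \<subseteq> subspace_sum L (\<lambda>j. colsp L (?A j)) ({..<K} - {i})"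
  have t: "?t < L" using assms(1,2) by simp
  have "col (?A i) (L - K) \<in> colsp L (?A i)"
    by (rule col_mem_colsp[OF chan_mat_mult_precoder_carrier]) simp
  then have "col (?A i) (L - K) \<in> subspace_sum L (\<lambda>j. colsp L (?A j)) ({..<K} - {i})"
    using sub by blast
  moreover have "v $ ?t = 0" if "v \<in> subspace_sum L (\<lambda>j. colsp L (?A j)) ({..<K} - {i})" for v
  proof (rule subspace_sum_index_eq_0[OF _ _ t _ that])
    fix j w assume j: "j \<in> {..<K} - {i}" and w: "w \<in> colsp L (?A j)"
    show "w $ ?t = 0"
    proof (rule colsp_index_eq_0[OF chan_mat_mult_precoder_carrier t _ w])
      fix c assume "c < L - K + 1"
      moreover have "precoder_row L K j c \<noteq> ?t" using j by (auto simp: precoder_row_def)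
      ultimately show "?A j $$ (?t, c) = 0" using t by (simp add: index_chan_mat_mult_precoder)
    qed
  qed (use csubspace_carrier[OF colsp_submodule[OF chan_mat_mult_precoder_carrier]] in auto)
  moreover have "col (?A i) (L - K) $ ?t = h (i, ?t)"
    using col_chan_mat_mult_precoder[OF assms(1,2), of "L - K"] t by (simp add: precoder_row_def)
  ultimately show False using assms(3) by simp
qed

lemma achievable_lower_bound:
  assumes "0 < K" "K \<le> L"
  shows "achievable K L (L - K + 1)"
  unfolding achievable_def
proof (intro exI[of _ "precoder L K"] conjI allI impI)
  fix j assume "j < K"
  then show "precoder L K j \<in> carrier_mat L (L - K + 1)" "vec_space.rank L (precoder L K j) = L - K + 1"
    using precoder_carrier rank_precoder assms(2) by auto
next
  show "AE h in chan_measure K L. \<forall>i<K.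
      subspace_sum L (\<lambda>j. colsp L (chan_mat L h i * precoder L K j)) {..<K} = carrier_vec L \<and>
      \<not> colsp L (chan_mat L h i * precoder L K i)
        \<subseteq> subspace_sum L (\<lambda>j. colsp L (chan_mat L h i * precoder L K j)) ({..<K} - {i})"
    using AE_chan_coeff_nonzero[of K L]
  proof eventually_elim
    case (elim h)
    have "L - K + i < L" if "i < K" for i using that assms by simp
    then show ?case
      using elim assms subspace_sum_colsp_chan_mat_mult_precoder colsp_chan_mat_mult_precoder_not_subset
      by simp
  qed
qed

theorem theorem1:
  fixes K L :: nat
  assumes "0 < K" and "0 < L" and "K \<le> L"
  shows "achievable K L (L - K + 1) \<and>
         (\<forall>d. achievable K L d \<longrightarrow> real d / real L \<le> real (L - K + 1) / real L)"
proof (intro conjI allI impI)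
  show "achievable K L (L - K + 1)"
    using achievable_lower_bound assms(1,3) .
  fix d assume "achievable K L d"
  then have "d + (K - 1) \<le> L"
    using achievable_upper_bound assms(1) by blast
  then have "real d \<le> real (L - K + 1)"
    using assms(1) by linarith
  then show "real d / real L \<le> real (L - K + 1) / real L"
    by (rule divide_right_mono) simp
qed

end
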